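(* In the setting of the context, suppose $G_{xy}^{[1]}=1$ and $G_x\cong D_{20}$. Then $G_e\cong D_8$.
   Context: $\mathcal{A}=(G_x,G_e,G_{xy})$ is a finite, primitive amalgam of degree $(5,2)$ (no nontrivial subgroup of $G_{xy}$ normal in both $G_x$ and $G_e$; $|G_x:G_{xy}|=5$, $|G_e:G_{xy}|=2$), $G=G_x*_{G_{xy}}G_e$ acts on the coset graph (5-valent tree) $\Gamma$, $x$ is the vertex with stabiliser $G_x$, $y$ the neighbour with $G_e$ the setwise stabiliser of $\{x,y\}$ and $G_x\cap G_y=G_{xy}$. $G_z^{[1]}$ is the pointwise stabiliser of $z$ and its neighbours, $G_{xy}^{[1]}=G_x^{[1]}\cap G_y^{[1]}$. $D_{2n}$ denotes the dihedral group of order $2n$. *)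

theory Defs
  imports "HOL-Algebra.Algebra"
begin

text \<open>The dihedral group of order 2n: element (i,b) stands for r^i s^b
  (r a rotation of order n, s a reflection, s r s = r^-1).\<close>
definition dihedral :: "nat \<Rightarrow> (nat \<times> bool) monoid" where
  "dihedral n = \<lparr> carrier = {0..<n} \<times> UNIV,
     monoid.mult = (\<lambda>(i, b) (j, c). ((if b then i + n - j else i + j) mod n, b \<noteq> c)),
     one = (0, False) \<rparr>"

definition amalgam :: "'a monoid \<Rightarrow> 'a monoid \<Rightarrow> bool" where
  "amalgam Gx Ge \<longleftrightarrow> group Gx \<and> group Ge \<and>
     subgroup (carrier Gx \<inter> carrier Ge) Gx \<and> subgroup (carrier Gx \<inter> carrier Ge) Ge \<and>
     (\<forall>a \<in> carrier Gx \<inter> carrier Ge. \<forall>b \<in> carrier Gx \<inter> carrier Ge.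
        a \<otimes>\<^bsub>Gx\<^esub> b = a \<otimes>\<^bsub>Ge\<^esub> b)"

definition amalgam_Gxy :: "'a monoid \<Rightarrow> 'a monoid \<Rightarrow> 'a set" where
  "amalgam_Gxy Gx Ge = carrier Gx \<inter> carrier Ge"

definition finite_primitive_amalgam_52 :: "'a monoid \<Rightarrow> 'a monoid \<Rightarrow> bool" where
  "finite_primitive_amalgam_52 Gx Ge \<longleftrightarrow> amalgam Gx Ge \<and>
     finite (carrier Gx) \<and> finite (carrier Ge) \<and>
     card (carrier Gx) = 5 * card (amalgam_Gxy Gx Ge) \<and>
     card (carrier Ge) = 2 * card (amalgam_Gxy Gx Ge) \<and>
     (\<forall>N. N \<subseteq> amalgam_Gxy Gx Ge \<longrightarrow> N \<lhd> Gx \<longrightarrow> N \<lhd> Ge \<longrightarrow> N = {\<one>\<^bsub>Gx\<^esub>})"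

text \<open>G_x^[1]: kernel of G_x on the neighbours of x, i.e. on the cosets of G_xy
  (the core of G_xy in G_x).\<close>
definition Gx_kernel :: "'a monoid \<Rightarrow> 'a monoid \<Rightarrow> 'a set" where
  "Gx_kernel Gx Ge = (\<Inter>g \<in> carrier Gx. g <#\<^bsub>Gx\<^esub> (amalgam_Gxy Gx Ge) #>\<^bsub>Gx\<^esub> inv\<^bsub>Gx\<^esub> g)"

text \<open>G_y^[1] = t G_x^[1] t^-1 for any t in G_e - G_xy (independent of t);
  it lies in G_xy, so it is computed inside G_e.\<close>
definition Gy_kernel :: "'a monoid \<Rightarrow> 'a monoid \<Rightarrow> 'a set" where
  "Gy_kernel Gx Ge = (\<Inter>t \<in> carrier Ge - amalgam_Gxy Gx Ge.
       t <#\<^bsub>Ge\<^esub> (Gx_kernel Gx Ge) #>\<^bsub>Ge\<^esub> inv\<^bsub>Ge\<^esub> t)"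

definition Gxy_kernel :: "'a monoid \<Rightarrow> 'a monoid \<Rightarrow> 'a set" where
  "Gxy_kernel Gx Ge = Gx_kernel Gx Ge \<inter> Gy_kernel Gx Ge"

end

(* G_xy has index 5 in G_x = D20, so it has order 4.  As D20 has no elements of order 4,
   G_xy is a Klein four-group, and every such subgroup of D20 contains the central half-turn z.
   Being central in G_x, z lies in G_x^[1]; as G_xy^[1] = 1, z is not in G_y^[1], so some
   element of G_e does not commute with z.  Hence G_e is a nonabelian group of order 8 with a
   Klein four-subgroup G_xy of index 2.  Such a group is D8: it contains an element r of
   order 4 outside G_xy, with z r z = r^-1, and r, z generate it. *)

theory Submission
  imports Defs
begin

section \<open>Dihedral groups\<close>

lemma dihedral_carrier_iff: "x \<in> carrier (dihedral n) \<longleftrightarrow> fst x < n"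
  by (cases x) (simp add: dihedral_def)

lemma dihedral_mult [simp]:
  "(i, b) \<otimes>\<^bsub>dihedral n\<^esub> (j, c) = ((if b then i + n - j else i + j) mod n, b \<noteq> c)"
  by (simp add: dihedral_def)

lemma dihedral_one [simp]: "\<one>\<^bsub>dihedral n\<^esub> = (0, False)"
  by (simp add: dihedral_def)

lemma card_dihedral: "card (carrier (dihedral n)) = 2 * n"
  by (simp add: dihedral_def card_cartesian_product)

lemma int_dihedral_index:
  assumes "j \<le> n"
  shows "int ((if b then i + n - j else i + j) mod n) = (if b then int i - int j else int i + int j) mod int n"
proof (cases b)
  case True
  have "int (i + n - j) = (int i - int j) + int n"
    using assms by simp
  then show ?thesis
    using True by (simp only: of_nat_mod mod_add_self2 if_True)
qed (simp add: of_nat_mod)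

lemma dihedral_group:
  assumes "0 < n"
  shows "group (dihedral n)"
proof (rule groupI)
  fix x y z
  assume "x \<in> carrier (dihedral n)" "y \<in> carrier (dihedral n)" "z \<in> carrier (dihedral n)"
  then obtain i b j c k d where xyz: "x = (i, b)" "y = (j, c)" "z = (k, d)" "j \<le> n" "k \<le> n"
    by (metis dihedral_carrier_iff less_imp_le prod.collapse)
  \<comment> \<open>On integer representatives the index arithmetic is plain addition and subtraction mod n.\<close>
  have "int (fst (x \<otimes>\<^bsub>dihedral n\<^esub> y \<otimes>\<^bsub>dihedral n\<^esub> z))
      = int (fst (x \<otimes>\<^bsub>dihedral n\<^esub> (y \<otimes>\<^bsub>dihedral n\<^esub> z)))"
    unfolding xyz(1-3) dihedral_mult fst_conv
    using xyz(4,5) mod_le_divisor[OF assms]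
    by (simp only: int_dihedral_index) (cases b; cases c; simp add: mod_simps algebra_simps)
  then show "x \<otimes>\<^bsub>dihedral n\<^esub> y \<otimes>\<^bsub>dihedral n\<^esub> z = x \<otimes>\<^bsub>dihedral n\<^esub> (y \<otimes>\<^bsub>dihedral n\<^esub> z)"
    by (simp add: xyz(1-3)) (cases b; cases c; simp)
next
  fix x y
  assume "x \<in> carrier (dihedral n)" "y \<in> carrier (dihedral n)"
  then show "x \<otimes>\<^bsub>dihedral n\<^esub> y \<in> carrier (dihedral n)"
    using assms by (cases x; cases y) (simp add: dihedral_carrier_iff)
next
  show "\<one>\<^bsub>dihedral n\<^esub> \<in> carrier (dihedral n)"
    using assms by (simp add: dihedral_carrier_iff)
next
  fix x
  assume "x \<in> carrier (dihedral n)"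
  then show "\<one>\<^bsub>dihedral n\<^esub> \<otimes>\<^bsub>dihedral n\<^esub> x = x"
    by (cases x) (simp add: dihedral_carrier_iff)
next
  fix x
  assume "x \<in> carrier (dihedral n)"
  then obtain i b where x: "x = (i, b)" "i < n"
    by (metis dihedral_carrier_iff prod.collapse)
  show "\<exists>y \<in> carrier (dihedral n). y \<otimes>\<^bsub>dihedral n\<^esub> x = \<one>\<^bsub>dihedral n\<^esub>"
  proof (cases b)
    case True
    then show ?thesis
      using x by (intro bexI[of _ x]) (simp_all add: dihedral_carrier_iff)
  next
    case False
    then show ?thesis
      using x assms
      by (intro bexI[of _ "((n - i) mod n, False)"]) (auto simp: dihedral_carrier_iff mod_add_left_eq)
  qed
qed

lemma dihedral_half_turn_commute:
  assumes "even n" "x \<in> carrier (dihedral n)"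
  shows "(n div 2, False) \<otimes>\<^bsub>dihedral n\<^esub> x = x \<otimes>\<^bsub>dihedral n\<^esub> (n div 2, False)"
  using assms by (cases x) (auto simp: add.commute elim!: evenE)

lemma dihedral_rotation_pow:
  "(i, False) [^]\<^bsub>dihedral n\<^esub> (k::nat) = ((k * i) mod n, False)"
  by (induction k) (simp_all add: mod_add_right_eq add.commute)

lemma dihedral10_square_eq_one_if_pow4:
  assumes "x [^]\<^bsub>dihedral 10\<^esub> (4::nat) = (0, False)"
  shows "x \<otimes>\<^bsub>dihedral 10\<^esub> x = (0, False)"
proof -
  obtain i b where x: "x = (i, b)" by fastforce
  show ?thesis
  proof (cases b)
    case False
    then have "(4 * i) mod 10 = 0"
      using assms x by (simp add: dihedral_rotation_pow)
    then show ?thesis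
      using x False by simp presburger
  qed (simp add: x)
qed

lemma dihedral_involution_subgroup_contains_half_turn:
  assumes H: "subgroup H (dihedral n)" and card: "card H = 4"
    and sq: "\<And>x. x \<in> H \<Longrightarrow> x \<otimes>\<^bsub>dihedral n\<^esub> x = (0, False)"
  shows "(n div 2, False) \<in> H"
proof (rule ccontr)
  assume half_turn: "(n div 2, False) \<notin> H"
  have H_carrier: "fst x < n" if "x \<in> H" for x
    using subgroup.mem_carrier[OF H that] by (simp add: dihedral_carrier_iff)
  have reflection: "snd x" if "x \<in> H" "x \<noteq> (0, False)" for x
  proof (rule ccontr)
    obtain i b where x: "x = (i, b)" by fastforce
    assume "\<not> snd x"
    then have "(i + i) mod n = 0" "i < n" "i \<noteq> 0"
      using sq[OF that(1)] H_carrier[OF that(1)] that(2) x by auto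
    then have "i + i = n"
      by (auto simp: mod_if split: if_splits)
    then show False
      using half_turn that(1) x \<open>\<not> snd x\<close> by auto
  qed
  have "(0, False) \<in> H"
    using subgroup.one_closed[OF H] by simp
  moreover have "finite H"
    using card card.infinite by fastforce
  ultimately have "card (H - {(0, False)}) = 3"
    using card by (simp add: card_Diff_singleton)
  then obtain a c d where acd: "H - {(0, False)} = {a, c, d}" "a \<noteq> c"
    by (metis card_3_iff)
  then have ac: "a \<in> H" "c \<in> H" "a \<noteq> (0, False)" "c \<noteq> (0, False)" "a \<noteq> c"
    by blast+
  obtain i j where ij: "a = (i, True)" "c = (j, True)" "i < n" "j < n" "i \<noteq> j"
    using reflection[OF ac(1,3)] reflection[OF ac(2,4)] H_carrier ac
    by (metis prod.collapse)
  have "a \<otimes>\<^bsub>dihedral n\<^esub> c \<in> H"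
    using subgroup.m_closed[OF H ac(1,2)] .
  moreover have "(i + n - j) mod n \<noteq> 0"
    using ij by (auto simp: mod_if split: if_splits)
  ultimately show False
    using reflection ij by fastforce
qed

lemma (in group) subgroup_pow_card_eq_one:
  assumes "subgroup H G" "x \<in> H"
  shows "x [^] card H = \<one>"
proof -
  interpret H: group "G\<lparr>carrier := H\<rparr>"
    by (rule subgroup.subgroup_is_group[OF assms(1) is_group])
  have "x [^]\<^bsub>G\<lparr>carrier := H\<rparr>\<^esub> order (G\<lparr>carrier := H\<rparr>) = \<one>"
    using H.pow_order_eq_1 assms(2) by simp
  then show ?thesis
    by (simp add: order_def nat_pow_def)
qed

lemma (in group) order4_subgroup_of_dihedral10_iso:
  assumes "G \<cong> dihedral 10" and V: "subgroup V G" "card V = 4"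
  obtains z where "z \<in> V" "z \<noteq> \<one>" "\<And>g. g \<in> carrier G \<Longrightarrow> g \<otimes> z = z \<otimes> g"
    and "\<And>x. x \<in> V \<Longrightarrow> x \<otimes> x = \<one>"
proof -
  let ?D = "dihedral 10"
  have D: "group ?D"
    by (simp add: dihedral_group)
  obtain \<phi> where \<phi>: "\<phi> \<in> iso G ?D"
    using assms(1) by (auto simp: is_iso_def)
  interpret \<phi>: group_hom G ?D \<phi>
    using \<phi> D by (intro group_hom.intro group_hom_axioms.intro is_group iso_imp_homomorphism)
  have inj: "inj_on \<phi> (carrier G)"
    using \<phi> by (simp add: iso_iff)
  have VG: "V \<subseteq> carrier G"
    using V(1) by (rule subgroup.subset)
  have H: "subgroup (\<phi> ` V) ?D"
    by (rule \<phi>.subgroup_img_is_subgroup[OF V(1)])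
  have card: "card (\<phi> ` V) = 4"
    using card_image[OF inj_on_subset[OF inj VG]] V(2) by simp
  have sq: "y \<otimes>\<^bsub>?D\<^esub> y = (0, False)" if "y \<in> \<phi> ` V" for y
    using dihedral10_square_eq_one_if_pow4 group.subgroup_pow_card_eq_one[OF D H that] card by simp
  have "(5, False) \<in> \<phi> ` V"
    using dihedral_involution_subgroup_contains_half_turn[OF H card sq] by simp
  then obtain z where z: "z \<in> V" "\<phi> z = (5, False)"
    by (metis imageE)
  show thesis
  proof (rule that)
    show "z \<in> V" "z \<noteq> \<one>"
      using z by auto
    show "g \<otimes> z = z \<otimes> g" if g: "g \<in> carrier G" for g
    proof (rule inj_onD[OF inj])
      show "\<phi> (g \<otimes> z) = \<phi> (z \<otimes> g)"
        using dihedral_half_turn_commute[of 10 "\<phi> g"] g z VG by auto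
    qed (use g z VG in auto)
    show "x \<otimes> x = \<one>" if x: "x \<in> V" for x
    proof (rule inj_onD[OF inj])
      show "\<phi> (x \<otimes> x) = \<phi> \<one>"
        using sq[of "\<phi> x"] x VG by auto
    qed (use x VG in auto)
  qed
qed

section \<open>Recognising the dihedral group of order 8\<close>

lemma (in group) index_two_rcoset_cover:
  assumes V: "subgroup V G" and fin: "finite (carrier G)" and index: "card (carrier G) = 2 * card V"
    and g: "g \<in> carrier G" "g \<notin> V"
  shows "carrier G = V \<union> (V #> g)"
proof -
  have VG: "V \<subseteq> carrier G"
    using V by (rule subgroup.subset)
  have "card (V #> g) = card V"
    using card_rcosets_equal[OF rcosetsI[OF VG g(1)] VG] by simp
  moreover have "V \<inter> (V #> g) = {}"
  proof -
    have "g \<in> V" if "v \<in> V" "w \<in> V" "v = w \<otimes> g" for v w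
    proof -
      have "g = inv w \<otimes> v"
        using that VG g(1) by (simp add: m_assoc[symmetric] subsetD)
      then show ?thesis
        using V that(1,2) by (metis subgroup.m_closed subgroup.m_inv_closed)
    qed
    then show ?thesis
      using g(2) unfolding r_coset_def by blast
  qed
  moreover have "V \<union> (V #> g) \<subseteq> carrier G"
    using VG g(1) r_coset_subset_G by blast
  ultimately show ?thesis
    using fin index finite_subset[OF VG] rev_finite_subset[OF fin]
    by (metis card_Un_disjoint card_subset_eq mult_2 r_coset_subset_G g(1) VG)
qed

lemma (in group) index_two_square_mem:
  assumes "subgroup V G" "finite (carrier G)" "card (carrier G) = 2 * card V"
    and g: "g \<in> carrier G" "g \<notin> V"
  shows "g \<otimes> g \<in> V"
proof (rule ccontr)
  assume "g \<otimes> g \<notin> V"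
  then have "g \<otimes> g \<in> V #> g"
    using index_two_rcoset_cover[OF assms] g m_closed[OF g(1) g(1)] by blast
  then obtain v where "v \<in> V" "g \<otimes> g = v \<otimes> g"
    unfolding r_coset_def by blast
  then show False
    using g subgroup.mem_carrier[OF assms(1)] by auto
qed

lemma (in group) index_two_conj_mem:
  assumes V: "subgroup V G" "finite (carrier G)" "card (carrier G) = 2 * card V"
    and g: "g \<in> carrier G" "g \<notin> V" and v: "v \<in> V"
  shows "inv g \<otimes> v \<otimes> g \<in> V"
proof (rule ccontr)
  have vG: "v \<in> carrier G"
    using subgroup.mem_carrier[OF V(1) v] .
  assume "inv g \<otimes> v \<otimes> g \<notin> V"
  then have "inv g \<otimes> v \<otimes> g \<in> V #> g"
    using index_two_rcoset_cover[OF V g] g vG by (metis UnE inv_closed m_closed)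
  then obtain w where w: "w \<in> V" "inv g \<otimes> v \<otimes> g = w \<otimes> g"
    unfolding r_coset_def by blast
  then have "inv g = w \<otimes> inv v"
    using g vG subgroup.mem_carrier[OF V(1)] by (simp add: inv_solve_right)
  then have "inv g \<in> V"
    using V(1) v w(1) by (simp add: subgroup.m_closed subgroup.m_inv_closed)
  then show False
    using g V(1) by (metis inv_inv subgroup.m_inv_closed)
qed

lemma (in group) exponent_two_order4_subgroup_eq:
  assumes V: "subgroup V G" "card V = 4" and sq: "\<And>x. x \<in> V \<Longrightarrow> x \<otimes> x = \<one>"
    and ab: "a \<in> V" "b \<in> V" "a \<noteq> \<one>" "b \<noteq> \<one>" "a \<noteq> b"
  shows "V = {\<one>, a, b, a \<otimes> b}"
proof -
  have G: "a \<in> carrier G" "b \<in> carrier G"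
    using ab subgroup.mem_carrier[OF V(1)] by auto
  have "a \<otimes> b \<noteq> a \<otimes> a"
    using G ab(5) by simp
  then have "a \<otimes> b \<noteq> \<one>"
    using sq[OF ab(1)] by simp
  moreover have "a \<otimes> b \<noteq> a" "a \<otimes> b \<noteq> b"
    using G ab(3,4) by (metis l_cancel_one' r_cancel_one')+
  ultimately have "card {\<one>, a, b, a \<otimes> b} = 4"
    using ab by auto
  moreover have "{\<one>, a, b, a \<otimes> b} \<subseteq> V"
    using V(1) ab by (auto intro: subgroup.one_closed subgroup.m_closed)
  moreover have "finite V"
    using V(2) card.infinite by fastforce
  ultimately show ?thesis
    using V(2) by (metis card_subset_eq)
qed

lemma (in group) exists_noninvolution_not_commuting:
  assumes z: "z \<in> carrier G" "z \<otimes> z = \<one>" and t: "t \<in> carrier G" "t \<otimes> z \<noteq> z \<otimes> t"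
  obtains r where "r \<in> carrier G" "r \<otimes> r \<noteq> \<one>" "r \<otimes> z \<noteq> z \<otimes> r"
proof (cases "t \<otimes> t = \<one>")
  case False
  then show thesis
    using that t by blast
next
  case True
  have inv_z: "inv z = z" and inv_t: "inv t = t"
    using z t True by (simp_all add: inv_equality)
  have "(t \<otimes> z) \<otimes> (t \<otimes> z) \<noteq> \<one>"
  proof
    assume "(t \<otimes> z) \<otimes> (t \<otimes> z) = \<one>"
    then have "inv (t \<otimes> z) = t \<otimes> z"
      using z t by (simp add: inv_equality)
    then show False
      using z t inv_z inv_t by (simp add: inv_mult_group)
  qed
  moreover have "(t \<otimes> z) \<otimes> z \<noteq> z \<otimes> (t \<otimes> z)"
  proof
    assume "(t \<otimes> z) \<otimes> z = z \<otimes> (t \<otimes> z)"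
    then have "z \<otimes> t = z \<otimes> ((z \<otimes> (t \<otimes> z)))"
      using z t by (simp add: m_assoc)
    then show False
      using z t by (simp add: m_assoc[symmetric])
  qed
  ultimately show thesis
    using that z t by blast
qed

lemma (in group) nat_pow_mod_eq:
  assumes "r \<in> carrier G" "r [^] (n::nat) = \<one>"
  shows "r [^] (k mod n) = r [^] k"
proof -
  have "r [^] k = r [^] (k mod n) \<otimes> (r [^] n) [^] (k div n)"
    using assms(1) by (simp add: nat_pow_pow nat_pow_mult)
  then show ?thesis
    using assms by simp
qed

lemma (in group) nat_pow_add_diff_mod:
  assumes r: "r \<in> carrier G" "r [^] n = \<one>" and "j \<le> n"
  shows "r [^] ((i + n - j) mod n :: nat) = r [^] i \<otimes> inv (r [^] j)"
proof -
  have "r [^] (i + n - j) \<otimes> r [^] j = r [^] i"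
    using r assms(3) by (simp add: nat_pow_mult flip: nat_pow_mult[of r i n])
  then show ?thesis
    using r by (simp add: nat_pow_mod_eq inv_solve_right)
qed

lemma (in group) involution_cancel:
  assumes "s \<in> carrier G" "s \<otimes> s = \<one>" "x \<in> carrier G"
  shows "s \<otimes> (s \<otimes> x) = x"
  using assms by (simp add: m_assoc[symmetric])

lemma (in group) involution_conj_nat_pow:
  assumes r: "r \<in> carrier G" and s: "s \<in> carrier G" "s \<otimes> s = \<one>" "s \<otimes> r \<otimes> s = inv r"
  shows "s \<otimes> r [^] (j::nat) \<otimes> s = inv (r [^] j)"
proof (induction j)
  case (Suc j)
  have "s \<otimes> r [^] Suc j \<otimes> s = (s \<otimes> r [^] j \<otimes> s) \<otimes> (s \<otimes> r \<otimes> s)"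
    using r s(1,2) by (simp add: m_assoc involution_cancel)
  also have "\<dots> = inv r [^] Suc j"
    using Suc r s by (simp add: nat_pow_inv)
  finally show ?case
    by (metis nat_pow_inv r)
qed (use s in simp)

lemma (in group) dihedral_hom:
  assumes r: "r \<in> carrier G" "r [^] n = \<one>" and s: "s \<in> carrier G" "s \<otimes> s = \<one>" "s \<otimes> r \<otimes> s = inv r"
  shows "(\<lambda>(i, b). r [^] i \<otimes> (if b then s else \<one>)) \<in> hom (dihedral n) G"
proof -
  have flip: "s \<otimes> (if c then s else \<one>) = (if \<not> c then s else \<one>)" for c
    using s by simp
  have mult: "r [^] ((if b then i + n - j else i + j) mod n) \<otimes> (if b \<noteq> c then s else \<one>)
      = r [^] i \<otimes> (if b then s else \<one>) \<otimes> (r [^] j \<otimes> (if c then s else \<one>))"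
    if "j < n" for i j :: nat and b c
  proof (cases b)
    case False
    then show ?thesis
      using r s by (simp add: nat_pow_mod_eq nat_pow_mult[symmetric] m_assoc)
  next
    case True
    have "r [^] i \<otimes> s \<otimes> (r [^] j \<otimes> (if c then s else \<one>))
        = r [^] i \<otimes> (s \<otimes> r [^] j \<otimes> s) \<otimes> (s \<otimes> (if c then s else \<one>))"
      using r s by (simp add: m_assoc involution_cancel)
    also have "\<dots> = r [^] ((i + n - j) mod n) \<otimes> (if \<not> c then s else \<one>)"
      using involution_conj_nat_pow[OF r(1) s] nat_pow_add_diff_mod[OF r less_imp_le[OF that]] flip
      by simp
    finally show ?thesis
      using True by simp
  qed
  show ?thesis
    unfolding hom_def using r s mult by (auto simp: dihedral_carrier_iff)
qed

lemma (in group) dihedral_iso_of_generators: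
  assumes "0 < n" and order: "card (carrier G) = 2 * n"
    and r: "r \<in> carrier G" "r [^] n = \<one>" and s: "s \<in> carrier G" "s \<otimes> s = \<one>" "s \<otimes> r \<otimes> s = inv r"
    and gen: "carrier G \<subseteq> generate G {r, s}"
  shows "G \<cong> dihedral n"
proof -
  define \<psi> where "\<psi> = (\<lambda>(i::nat, b). r [^] i \<otimes> (if b then s else \<one>))"
  have D: "group (dihedral n)"
    using assms(1) by (rule dihedral_group)
  have hom: "\<psi> \<in> hom (dihedral n) G"
    unfolding \<psi>_def using r s by (rule dihedral_hom)
  then interpret \<psi>: group_hom "dihedral n" G \<psi>
    using D by (intro group_hom.intro group_hom_axioms.intro is_group)
  have "\<psi> (1 mod n, False) = r" "\<psi> (0, True) = s"
    using nat_pow_mod_eq[OF r, of 1] r(1) s(1) by (simp_all add: \<psi>_def)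
  moreover have "(1 mod n, False) \<in> carrier (dihedral n)" "(0, True) \<in> carrier (dihedral n)"
    using assms(1) by (simp_all add: dihedral_carrier_iff)
  ultimately have "{r, s} \<subseteq> \<psi> ` carrier (dihedral n)"
    by (metis empty_subsetI image_eqI insert_subset)
  then have "generate G {r, s} \<subseteq> \<psi> ` carrier (dihedral n)"
    using \<psi>.img_is_subgroup by (rule generate_subgroup_incl)
  then have surj: "\<psi> ` carrier (dihedral n) = carrier G"
    using gen \<psi>.hom_closed by blast
  have "finite (carrier (dihedral n))"
    by (simp add: dihedral_def)
  then have "inj_on \<psi> (carrier (dihedral n))"
    by (rule eq_card_imp_inj_on) (simp add: surj order card_dihedral)
  then have "\<psi> \<in> iso (dihedral n) G"
    using hom surj by (simp add: iso_iff)
  then show ?thesis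
    using group.iso_sym[OF D] is_isoI by blast
qed

lemma (in group) order8_rotation_exists:
  assumes order: "card (carrier G) = 8" and V: "subgroup V G" "card V = 4"
    and sq: "\<And>x. x \<in> V \<Longrightarrow> x \<otimes> x = \<one>" and z: "z \<in> V"
    and t: "t \<in> carrier G" "t \<otimes> z \<noteq> z \<otimes> t"
  obtains r where "r \<in> carrier G" "r \<notin> V" "r [^] (4::nat) = \<one>" "z \<otimes> r \<otimes> z = inv r"
    and "V = {\<one>, z, r \<otimes> r, z \<otimes> (r \<otimes> r)}"
proof -
  have fin: "finite (carrier G)"
    using order card.infinite by fastforce
  have index: "card (carrier G) = 2 * card V"
    using order V(2) by simp
  have zG: "z \<in> carrier G"
    using subgroup.mem_carrier[OF V(1) z] .
  obtain r where r: "r \<in> carrier G" "r \<otimes> r \<noteq> \<one>" "r \<otimes> z \<noteq> z \<otimes> r"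
    using exists_noninvolution_not_commuting[OF zG sq[OF z] t] .
  have rV: "r \<notin> V"
    using sq r(2) by blast
  define q where "q = r \<otimes> r"
  have qV: "q \<in> V"
    unfolding q_def using index_two_square_mem[OF V(1) fin index r(1) rV] .
  have z1: "z \<noteq> \<one>"
    using r(1,3) by auto
  have q1: "q \<noteq> \<one>"
    using r(2) by (simp add: q_def)
  have qz: "q \<noteq> z"
  proof
    assume "q = z"
    then show False
      using r(1,3) m_assoc[OF r(1) r(1) r(1)] by (simp add: q_def)
  qed
  have Veq: "V = {\<one>, z, q, z \<otimes> q}"
    using exponent_two_order4_subgroup_eq[OF V sq z qV z1 q1 qz[symmetric]] .
  \<comment> \<open>Conjugation by r permutes the involutions z, q, z q of V, moves z and fixes q = r^2.\<close>
  define c where "c = inv r \<otimes> z \<otimes> r"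
  have rc: "z \<otimes> r = r \<otimes> c"
    using r(1) zG by (simp add: c_def m_assoc[symmetric])
  have "c \<in> V"
    unfolding c_def using index_two_conj_mem[OF V(1) fin index r(1) rV z] .
  moreover have "c \<noteq> \<one>"
    using rc r(1) zG z1 by auto
  moreover have "c \<noteq> z"
    using rc r(3) by auto
  moreover have "c \<noteq> q"
  proof
    assume "c = q"
    then have "z \<otimes> r = q \<otimes> r"
      using rc r(1) by (simp add: q_def m_assoc)
    then show False
      using qz zG r(1) q_def by simp
  qed
  ultimately have c: "c = z \<otimes> q"
    using Veq by blast
  have "inv r \<otimes> z = z \<otimes> r"
    using c zG r(1) by (simp add: c_def q_def m_assoc[symmetric])
  then have "z \<otimes> inv r \<otimes> z = z \<otimes> z \<otimes> r"
    using zG r(1) by (simp add: m_assoc)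
  then have "z \<otimes> inv r \<otimes> z = r"
    using r(1) sq[OF z] by simp
  then have "inv (z \<otimes> inv r \<otimes> z) = inv r"
    by simp
  then have rel: "z \<otimes> r \<otimes> z = inv r"
    using zG r(1) sq[OF z] by (simp add: inv_mult_group inv_equality m_assoc)
  have "r [^] (4::nat) = q \<otimes> q"
    using r(1) by (simp add: q_def numeral_eq_Suc m_assoc)
  then have "r [^] (4::nat) = \<one>"
    using sq[OF qV] by simp
  then show thesis
    using that r(1) rV rel Veq by (simp add: q_def)
qed

lemma (in group) dihedral8_recognition:
  assumes order: "card (carrier G) = 8" and V: "subgroup V G" "card V = 4"
    and sq: "\<And>x. x \<in> V \<Longrightarrow> x \<otimes> x = \<one>" and z: "z \<in> V"
    and t: "t \<in> carrier G" "t \<otimes> z \<noteq> z \<otimes> t"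
  shows "G \<cong> dihedral 4"
proof -
  obtain r where r: "r \<in> carrier G" "r \<notin> V" "r [^] (4::nat) = \<one>" "z \<otimes> r \<otimes> z = inv r"
    and Veq: "V = {\<one>, z, r \<otimes> r, z \<otimes> (r \<otimes> r)}"
    using order8_rotation_exists[OF assms] .
  have fin: "finite (carrier G)"
    using order card.infinite by fastforce
  have index: "card (carrier G) = 2 * card V"
    using order V(2) by simp
  have zG: "z \<in> carrier G"
    using subgroup.mem_carrier[OF V(1) z] .
  let ?W = "generate G {r, z}"
  have W: "subgroup ?W G"
    using r(1) zG by (intro generate_is_subgroup) auto
  have rz: "r \<in> ?W" "z \<in> ?W"
    by (auto intro: generate.incl)
  then have "\<one> \<in> ?W" "r \<otimes> r \<in> ?W" "z \<otimes> (r \<otimes> r) \<in> ?W"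
    using subgroup.one_closed[OF W] subgroup.m_closed[OF W] by blast+
  then have VW: "V \<subseteq> ?W"
    using Veq rz by auto
  then have "V #> r \<subseteq> ?W"
    unfolding r_coset_def using rz(1) subgroup.m_closed[OF W] by blast
  then have "carrier G \<subseteq> ?W"
    using index_two_rcoset_cover[OF V(1) fin index r(1,2)] VW by blast
  then show ?thesis
    using dihedral_iso_of_generators[of 4 r z] order r zG sq[OF z] by simp
qed

section \<open>Amalgams\<close>

lemma amalgam_one_eq:
  assumes "amalgam Gx Ge"
  shows "\<one>\<^bsub>Gx\<^esub> = \<one>\<^bsub>Ge\<^esub>"
proof -
  interpret Gx: group Gx
    using assms by (simp add: amalgam_def)
  interpret Ge: group Ge
    using assms by (simp add: amalgam_def)
  have one: "\<one>\<^bsub>Gx\<^esub> \<in> carrier Gx \<inter> carrier Ge"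
    using assms subgroup.one_closed by (fastforce simp: amalgam_def)
  have agree: "\<forall>a \<in> carrier Gx \<inter> carrier Ge. \<forall>b \<in> carrier Gx \<inter> carrier Ge.
      a \<otimes>\<^bsub>Gx\<^esub> b = a \<otimes>\<^bsub>Ge\<^esub> b"
    using assms by (simp add: amalgam_def)
  have "\<one>\<^bsub>Gx\<^esub> \<otimes>\<^bsub>Gx\<^esub> \<one>\<^bsub>Gx\<^esub> = \<one>\<^bsub>Gx\<^esub> \<otimes>\<^bsub>Ge\<^esub> \<one>\<^bsub>Gx\<^esub>"
    using bspec[OF bspec[OF agree one] one] .
  then show ?thesis
    using one by simp
qed

lemma amalgam_Gxy_square_eq_one:
  assumes "amalgam Gx Ge" "x \<in> amalgam_Gxy Gx Ge" "x \<otimes>\<^bsub>Gx\<^esub> x = \<one>\<^bsub>Gx\<^esub>"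
  shows "x \<otimes>\<^bsub>Ge\<^esub> x = \<one>\<^bsub>Ge\<^esub>"
  using assms amalgam_one_eq[OF assms(1)] by (simp add: amalgam_def amalgam_Gxy_def)

lemma central_mem_Gx_kernel:
  assumes "group Gx" and z: "z \<in> amalgam_Gxy Gx Ge"
    and central: "\<And>g. g \<in> carrier Gx \<Longrightarrow> g \<otimes>\<^bsub>Gx\<^esub> z = z \<otimes>\<^bsub>Gx\<^esub> g"
  shows "z \<in> Gx_kernel Gx Ge"
  unfolding Gx_kernel_def
proof
  interpret Gx: group Gx
    by (fact assms(1))
  fix g
  assume g: "g \<in> carrier Gx"
  have zG: "z \<in> carrier Gx"
    using z by (simp add: amalgam_Gxy_def)
  have "z = g \<otimes>\<^bsub>Gx\<^esub> z \<otimes>\<^bsub>Gx\<^esub> inv\<^bsub>Gx\<^esub> g"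
    using g zG central[OF g] by (simp add: Gx.m_assoc)
  then show "z \<in> g <#\<^bsub>Gx\<^esub> amalgam_Gxy Gx Ge #>\<^bsub>Gx\<^esub> inv\<^bsub>Gx\<^esub> g"
    using z unfolding l_coset_def r_coset_def by blast
qed

lemma not_mem_Gy_kernel_obtains_noncommuting:
  assumes "group Ge" and z: "z \<in> carrier Ge" "z \<in> Gx_kernel Gx Ge" "z \<notin> Gy_kernel Gx Ge"
  obtains t where "t \<in> carrier Ge" "t \<otimes>\<^bsub>Ge\<^esub> z \<noteq> z \<otimes>\<^bsub>Ge\<^esub> t"
proof -
  interpret Ge: group Ge
    by (fact assms(1))
  obtain t where t: "t \<in> carrier Ge" "z \<notin> t <#\<^bsub>Ge\<^esub> Gx_kernel Gx Ge #>\<^bsub>Ge\<^esub> inv\<^bsub>Ge\<^esub> t"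
    using z(3) unfolding Gy_kernel_def by blast
  have "t \<otimes>\<^bsub>Ge\<^esub> z \<noteq> z \<otimes>\<^bsub>Ge\<^esub> t"
  proof
    assume "t \<otimes>\<^bsub>Ge\<^esub> z = z \<otimes>\<^bsub>Ge\<^esub> t"
    then have "z = t \<otimes>\<^bsub>Ge\<^esub> z \<otimes>\<^bsub>Ge\<^esub> inv\<^bsub>Ge\<^esub> t"
      using t(1) z(1) by (simp add: Ge.m_assoc)
    then show False
      using t(2) z(2) unfolding l_coset_def r_coset_def by blast
  qed
  then show thesis
    using that t(1) by blast
qed

theorem mainTheorem6:
  fixes Gx Ge :: "'a monoid"
  assumes "finite_primitive_amalgam_52 Gx Ge"
    and "Gxy_kernel Gx Ge = {\<one>\<^bsub>Gx\<^esub>}"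
    and "Gx \<cong> dihedral 10"
  shows "Ge \<cong> dihedral 4"
proof -
  let ?V = "amalgam_Gxy Gx Ge"
  have am: "amalgam Gx Ge" and card: "card (carrier Gx) = 5 * card ?V" "card (carrier Ge) = 2 * card ?V"
    using assms(1) by (simp_all add: finite_primitive_amalgam_52_def)
  then interpret Gx: group Gx + Ge: group Ge
    by (simp_all add: amalgam_def)
  have V: "subgroup ?V Gx" "subgroup ?V Ge" and cardV: "card ?V = 4"
    using am card(1) iso_same_card[OF assms(3)] by (simp_all add: amalgam_def amalgam_Gxy_def card_dihedral)
  obtain z where z: "z \<in> ?V" "z \<noteq> \<one>\<^bsub>Gx\<^esub>"
    and central: "\<And>g. g \<in> carrier Gx \<Longrightarrow> g \<otimes>\<^bsub>Gx\<^esub> z = z \<otimes>\<^bsub>Gx\<^esub> g"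
    and sq: "\<And>x. x \<in> ?V \<Longrightarrow> x \<otimes>\<^bsub>Gx\<^esub> x = \<one>\<^bsub>Gx\<^esub>"
    using Gx.order4_subgroup_of_dihedral10_iso[OF assms(3) V(1) cardV] by blast
  have zK: "z \<in> Gx_kernel Gx Ge"
    using central_mem_Gx_kernel[OF Gx.is_group z(1) central] .
  moreover have "z \<notin> Gy_kernel Gx Ge"
    using assms(2) z(2) zK by (auto simp: Gxy_kernel_def)
  moreover have "z \<in> carrier Ge"
    using z(1) by (simp add: amalgam_Gxy_def)
  ultimately obtain t where t: "t \<in> carrier Ge" "t \<otimes>\<^bsub>Ge\<^esub> z \<noteq> z \<otimes>\<^bsub>Ge\<^esub> t"
    using not_mem_Gy_kernel_obtains_noncommuting[OF Ge.is_group] by blast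
  have "card (carrier Ge) = 8"
    using card(2) cardV by simp
  then show ?thesis
    using Ge.dihedral8_recognition V(2) cardV amalgam_Gxy_square_eq_one[OF am _ sq] z(1) t by blast
qed

end
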